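(* Let $X$ be a non-empty presheaf of sets on $\mathscr{V}_f$ which is finite of degree $d$. Then (1) $|X(V)|<\infty$ for every finite-dimensional $V$; (2) $\gamma_X(t)=O(t^d)$.
   Context: $p$ prime, $\mathbb{F}=\mathbb{F}_p$, $\mathscr{V}_f$ finite-dimensional $\mathbb{F}$-vector spaces. $\mathscr{F}$ is the abelian category of functors $\mathscr{V}_f^{\mathrm{op}}\to$ ($\mathbb{F}$-vector spaces); $\mathbb{F}[X]$ is sectionwise linearization and $q_n$ is the left adjoint of the inclusion of functors of Eilenberg–MacLane polynomial degree $\le n$. A presheaf $X$ is finite if it embeds in a functor of $\mathscr{F}$ with a finite composition series; its degree is the least $n$ such that $X\to\mathbb{F}[X]\to q_n\mathbb{F}[X]$ is a monomorphism (equivalently the least polynomial degree of a finite functor into which $X$ embeds). The growth function is $\gamma_X(t)=\log_p|X(\mathbb{F}^t)|$ for $t\in\mathbb{N}$. *)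

theory Defs
  imports "Jordan_Normal_Form.Matrix" "HOL-Library.Landau_Symbols"
begin

text \<open>The base field is a finite field type 'k of prime cardinality p
(i.e. F_p). The category V_f is represented by its skeleton: objects are the
natural numbers n (standing for F^n), and a morphism F^m -> F^n is a matrix
A in carrier_mat n m (n rows, m columns); composition is matrix product and the
identity of F^n is 1_m n.\<close>

definition presheaf :: "(nat \<Rightarrow> 'a set) \<Rightarrow> ('k::field mat \<Rightarrow> 'a \<Rightarrow> 'a) \<Rightarrow> bool" where
  "presheaf X Xmap \<longleftrightarrow>
     (\<forall>n m A. A \<in> carrier_mat n m \<longrightarrow> (\<forall>x\<in>X n. Xmap A x \<in> X m)) \<and>
     (\<forall>n. \<forall>x\<in>X n. Xmap (1\<^sub>m n) x = x) \<and>
     (\<forall>n m l A B. A \<in> carrier_mat n m \<longrightarrow> B \<in> carrier_mat m l \<longrightarrow>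
        (\<forall>x\<in>X n. Xmap (A * B) x = Xmap B (Xmap A x)))"

text \<open>Vectors of the values of a functor in the category F are modelled as elements of
the F-vector space nat => 'k (pointwise operations); each value is a subspace.\<close>
definition vzero :: "nat \<Rightarrow> 'k::field" where "vzero = (\<lambda>_. 0)"

definition subspace_k :: "(nat \<Rightarrow> 'k::field) set \<Rightarrow> bool" where
  "subspace_k S \<longleftrightarrow> vzero \<in> S \<and>
     (\<forall>x\<in>S. \<forall>y\<in>S. (\<lambda>i. x i + y i) \<in> S) \<and>
     (\<forall>c. \<forall>x\<in>S. (\<lambda>i. c * x i) \<in> S)"

definition linear_on_k :: "(nat \<Rightarrow> 'k::field) set \<Rightarrow> ((nat \<Rightarrow> 'k) \<Rightarrow> (nat \<Rightarrow> 'k)) \<Rightarrow> bool" where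
  "linear_on_k S f \<longleftrightarrow>
     (\<forall>x\<in>S. \<forall>y\<in>S. f (\<lambda>i. x i + y i) = (\<lambda>i. f x i + f y i)) \<and>
     (\<forall>c. \<forall>x\<in>S. f (\<lambda>i. c * x i) = (\<lambda>i. c * f x i))"

definition vfunctor :: "(nat \<Rightarrow> (nat \<Rightarrow> 'k::field) set) \<Rightarrow> ('k mat \<Rightarrow> (nat \<Rightarrow> 'k) \<Rightarrow> (nat \<Rightarrow> 'k)) \<Rightarrow> bool" where
  "vfunctor F Fmap \<longleftrightarrow>
     (\<forall>n. subspace_k (F n)) \<and>
     (\<forall>n m A. A \<in> carrier_mat n m \<longrightarrow> (\<forall>x\<in>F n. Fmap A x \<in> F m) \<and> linear_on_k (F n) (Fmap A)) \<and>
     (\<forall>n. \<forall>x\<in>F n. Fmap (1\<^sub>m n) x = x) \<and>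
     (\<forall>n m l A B. A \<in> carrier_mat n m \<longrightarrow> B \<in> carrier_mat m l \<longrightarrow>
        (\<forall>x\<in>F n. Fmap (A * B) x = Fmap B (Fmap A x)))"

definition subfunctor :: "(nat \<Rightarrow> (nat \<Rightarrow> 'k::field) set) \<Rightarrow> (nat \<Rightarrow> (nat \<Rightarrow> 'k) set) \<Rightarrow> ('k mat \<Rightarrow> (nat \<Rightarrow> 'k) \<Rightarrow> (nat \<Rightarrow> 'k)) \<Rightarrow> bool" where
  "subfunctor G F Fmap \<longleftrightarrow>
     (\<forall>n. subspace_k (G n) \<and> G n \<subseteq> F n) \<and>
     (\<forall>n m A. A \<in> carrier_mat n m \<longrightarrow> (\<forall>x\<in>G n. Fmap A x \<in> G m))"

text \<open>A finite functor: one admitting a finite composition series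
0 = G_0 < G_1 < ... < G_k = F of subfunctors with simple subquotients
(i.e. no subfunctor strictly between consecutive terms).\<close>
definition finite_functor :: "(nat \<Rightarrow> (nat \<Rightarrow> 'k::field) set) \<Rightarrow> ('k mat \<Rightarrow> (nat \<Rightarrow> 'k) \<Rightarrow> (nat \<Rightarrow> 'k)) \<Rightarrow> bool" where
  "finite_functor F Fmap \<longleftrightarrow> vfunctor F Fmap \<and>
     (\<exists>k (Gs :: nat \<Rightarrow> nat \<Rightarrow> (nat \<Rightarrow> 'k) set).
        Gs 0 = (\<lambda>n. {vzero}) \<and> Gs k = F \<and>
        (\<forall>i\<le>k. subfunctor (Gs i) F Fmap) \<and>
        (\<forall>i<k. Gs i < Gs (Suc i) \<and>
           \<not> (\<exists>H. subfunctor H F Fmap \<and> Gs i < H \<and> H < Gs (Suc i))))"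

text \<open>Inclusion of F^(N - (b - a)) into F^N omitting the coordinate block [a, b).\<close>
definition incl_omit :: "nat \<Rightarrow> nat \<Rightarrow> nat \<Rightarrow> 'k::{zero,one} mat" where
  "incl_omit N a b = mat N (N - (b - a))
     (\<lambda>(r, c). if (c < a \<and> r = c) \<or> (a \<le> c \<and> r = c + (b - a)) then 1 else 0)"

text \<open>Eilenberg-MacLane cross effect cr_k F(F^(ms!0), ..., F^(ms!(k-1))) of a
contravariant functor: the intersection, over the summands i, of the kernels of
F applied to the inclusion of the sum of the other summands.\<close>
definition cross_effect :: "(nat \<Rightarrow> (nat \<Rightarrow> 'k::field) set) \<Rightarrow> ('k mat \<Rightarrow> (nat \<Rightarrow> 'k) \<Rightarrow> (nat \<Rightarrow> 'k)) \<Rightarrow> nat list \<Rightarrow> (nat \<Rightarrow> 'k) set" where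
  "cross_effect F Fmap ms =
     {x \<in> F (sum_list ms). \<forall>i<length ms.
        Fmap (incl_omit (sum_list ms) (sum_list (take i ms)) (sum_list (take (Suc i) ms))) x = vzero}"

definition poly_degree_le :: "(nat \<Rightarrow> (nat \<Rightarrow> 'k::field) set) \<Rightarrow> ('k mat \<Rightarrow> (nat \<Rightarrow> 'k) \<Rightarrow> (nat \<Rightarrow> 'k)) \<Rightarrow> nat \<Rightarrow> bool" where
  "poly_degree_le F Fmap n \<longleftrightarrow> (\<forall>ms. length ms = Suc n \<longrightarrow> cross_effect F Fmap ms = {vzero})"

definition embeds_into :: "(nat \<Rightarrow> 'a set) \<Rightarrow> ('k::field mat \<Rightarrow> 'a \<Rightarrow> 'a) \<Rightarrow> (nat \<Rightarrow> (nat \<Rightarrow> 'k) set) \<Rightarrow> ('k mat \<Rightarrow> (nat \<Rightarrow> 'k) \<Rightarrow> (nat \<Rightarrow> 'k)) \<Rightarrow> (nat \<Rightarrow> 'a \<Rightarrow> (nat \<Rightarrow> 'k)) \<Rightarrow> bool" where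
  "embeds_into X Xmap F Fmap \<eta> \<longleftrightarrow>
     (\<forall>n. inj_on (\<eta> n) (X n) \<and> (\<forall>x\<in>X n. \<eta> n x \<in> F n)) \<and>
     (\<forall>n m A. A \<in> carrier_mat n m \<longrightarrow> (\<forall>x\<in>X n. \<eta> m (Xmap A x) = Fmap A (\<eta> n x)))"

definition finite_deg_le :: "(nat \<Rightarrow> 'a set) \<Rightarrow> ('k::field mat \<Rightarrow> 'a \<Rightarrow> 'a) \<Rightarrow> nat \<Rightarrow> bool" where
  "finite_deg_le X Xmap d \<longleftrightarrow>
     (\<exists>(F :: nat \<Rightarrow> (nat \<Rightarrow> 'k) set) Fmap \<eta>. finite_functor F Fmap \<and> poly_degree_le F Fmap d
        \<and> embeds_into X Xmap F Fmap \<eta>)"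

definition finite_presheaf :: "(nat \<Rightarrow> 'a set) \<Rightarrow> ('k::field mat \<Rightarrow> 'a \<Rightarrow> 'a) \<Rightarrow> bool" where
  "finite_presheaf X Xmap \<longleftrightarrow>
     (\<exists>(F :: nat \<Rightarrow> (nat \<Rightarrow> 'k) set) Fmap \<eta>. finite_functor F Fmap \<and> embeds_into X Xmap F Fmap \<eta>)"

definition finite_of_degree :: "(nat \<Rightarrow> 'a set) \<Rightarrow> ('k::field mat \<Rightarrow> 'a \<Rightarrow> 'a) \<Rightarrow> nat \<Rightarrow> bool" where
  "finite_of_degree X Xmap d \<longleftrightarrow> finite_presheaf X Xmap \<and>
     finite_deg_le X Xmap d \<and> (\<forall>e<d. \<not> finite_deg_le X Xmap e)"

end

theory Submission
  imports Defs "HOL-Computational_Algebra.Primes"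
begin

text \<open>A step G < G' of a composition series is G' = G + \<langle>x\<rangle> for any x \<in> G' - G, where the value
of \<langle>x\<rangle> on F^n is spanned by the finitely many pullbacks of x along matrices; over a finite field
all values of a finite functor are therefore finite. If F has polynomial degree at most d, an
element of F(F^t) is determined by its pullbacks along the coordinate selections F^k \<rightarrow> F^t with
k \<le> d: once a difference is killed by all smaller selections, its pullback along a selection
with k > d lies in a (d+1)-st cross effect, hence vanishes. There are at most (d+1) t^d such
selections, so log |F(F^t)| = O(t^d), and the embedding of X into F transfers both bounds.\<close>

section \<open>Coordinate selections\<close>

definition selection_mat :: "nat \<Rightarrow> (nat \<Rightarrow> nat) \<Rightarrow> nat \<Rightarrow> 'k::field mat" where
  "selection_mat N g k = mat N k (\<lambda>(r, c). if r = g c then 1 else 0)"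

lemma selection_mat_carrier [simp]: "selection_mat N g k \<in> carrier_mat N k"
  by (simp add: selection_mat_def)

lemma selection_mat_mult:
  assumes "h ` {..<j} \<subseteq> {..<k}"
  shows "(selection_mat N g k :: 'k::field mat) * selection_mat k h j = selection_mat N (g \<circ> h) j"
proof (rule eq_matI)
  fix r c
  assume "r < dim_row (selection_mat N (g \<circ> h) j :: 'k mat)"
    and "c < dim_col (selection_mat N (g \<circ> h) j :: 'k mat)"
  hence r: "r < N" and c: "c < j" by (auto simp: selection_mat_def)
  have hc: "h c < k" using assms c by auto
  have "(selection_mat N g k * selection_mat k h j :: 'k mat) $$ (r, c)
      = (\<Sum>l\<in>{0..<k}. (if r = g l then 1 else 0) * (if l = h c then 1 else 0 :: 'k))"
    using r c by (simp add: selection_mat_def scalar_prod_def)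
  also have "\<dots> = (\<Sum>l\<in>{0..<k}. if l = h c then (if r = g (h c) then 1 else 0) else 0 :: 'k)"
    by (rule sum.cong) simp_all
  also have "\<dots> = selection_mat N (g \<circ> h) j $$ (r, c)"
    using hc r c by (simp add: selection_mat_def)
  finally show "(selection_mat N g k * selection_mat k h j :: 'k mat) $$ (r, c)
      = selection_mat N (g \<circ> h) j $$ (r, c)" .
qed (simp_all add: selection_mat_def)

lemma selection_mat_id: "(selection_mat N id N :: 'k::field mat) = 1\<^sub>m N"
  by (rule eq_matI) (auto simp: selection_mat_def)

lemma selection_mat_restrict:
  "(selection_mat N g k :: 'k::field mat) = selection_mat N (restrict g {..<k}) k"
  by (rule eq_matI) (auto simp: selection_mat_def)

lemma incl_omit_eq_selection_mat:
  "(incl_omit N a b :: 'k::field mat)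
     = selection_mat N (\<lambda>c. if c < a then c else c + (b - a)) (N - (b - a))"
  unfolding incl_omit_def selection_mat_def
  by (rule arg_cong[where f="mat _ _"]) (auto simp: fun_eq_iff)

lemma finite_carrier_mat: "finite (carrier_mat m n :: 'k::finite mat set)"
proof -
  let ?S = "({..<m} \<times> {..<n}) \<rightarrow>\<^sub>E (UNIV :: 'k set)"
  have "carrier_mat m n \<subseteq> (\<lambda>f. mat m n f) ` ?S"
  proof
    fix A :: "'k mat"
    assume A: "A \<in> carrier_mat m n"
    let ?f = "restrict (\<lambda>(i, j). A $$ (i, j)) ({..<m} \<times> {..<n})"
    have "A = mat m n ?f"
      using A by (intro eq_matI) auto
    moreover have "?f \<in> ?S" by simp
    ultimately show "A \<in> (\<lambda>f. mat m n f) ` ?S" by (rule image_eqI)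
  qed
  moreover have "finite ?S" by (rule finite_PiE) simp_all
  ultimately show ?thesis by (rule finite_subset[OF _ finite_imageI])
qed

lemma subspace_k_vzero: "subspace_k V \<Longrightarrow> vzero \<in> V"
  unfolding subspace_k_def by blast

lemma subspace_k_add: "subspace_k V \<Longrightarrow> x \<in> V \<Longrightarrow> y \<in> V \<Longrightarrow> (\<lambda>i. x i + y i) \<in> V"
  unfolding subspace_k_def by blast

lemma subspace_k_smult: "subspace_k V \<Longrightarrow> x \<in> V \<Longrightarrow> (\<lambda>i. c * x i) \<in> V"
  unfolding subspace_k_def by blast

lemma subspace_k_sum:
  assumes "subspace_k V" "finite S" "\<forall>A\<in>S. v A \<in> V"
  shows "(\<lambda>i. \<Sum>A\<in>S. c A * v A i) \<in> V"
  using assms(2,3)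
proof (induction S rule: finite_induct)
  case empty
  then show ?case using subspace_k_vzero[OF assms(1)] by (simp add: vzero_def)
next
  case (insert a S)
  then show ?case
    using subspace_k_add[OF assms(1) subspace_k_smult[OF assms(1)]] by simp
qed

lemma linear_on_k_add:
  "linear_on_k V f \<Longrightarrow> x \<in> V \<Longrightarrow> y \<in> V \<Longrightarrow> f (\<lambda>i. x i + y i) = (\<lambda>i. f x i + f y i)"
  unfolding linear_on_k_def by blast

lemma linear_on_k_smult: "linear_on_k V f \<Longrightarrow> x \<in> V \<Longrightarrow> f (\<lambda>i. c * x i) = (\<lambda>i. c * f x i)"
  unfolding linear_on_k_def by blast

lemma linear_on_k_vzero:
  assumes "linear_on_k V f" "subspace_k V"
  shows "f vzero = vzero"
  using linear_on_k_smult[OF assms(1) subspace_k_vzero[OF assms(2)], of 0]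
  by (simp add: vzero_def)

lemma linear_on_k_sum:
  assumes "linear_on_k V f" "subspace_k V" "finite S" "\<forall>A\<in>S. v A \<in> V"
  shows "f (\<lambda>i. \<Sum>A\<in>S. c A * v A i) = (\<lambda>i. \<Sum>A\<in>S. c A * f (v A) i)"
  using assms(3,4)
proof (induction S rule: finite_induct)
  case empty
  then show ?case using linear_on_k_vzero[OF assms(1,2)] by (simp add: vzero_def)
next
  case (insert a S)
  have "(\<lambda>i. c a * v a i) \<in> V" using insert subspace_k_smult[OF assms(2)] by simp
  moreover have "(\<lambda>i. \<Sum>A\<in>S. c A * v A i) \<in> V"
    using insert by (intro subspace_k_sum[OF assms(2)]) simp_all
  ultimately show ?case
    using insert linear_on_k_add[OF assms(1)] linear_on_k_smult[OF assms(1)] by simp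
qed

lemma linear_on_k_diff:
  assumes "linear_on_k V f" "subspace_k V" "x \<in> V" "y \<in> V"
  shows "f (\<lambda>i. x i - y i) = (\<lambda>i. f x i - f y i)"
  using linear_on_k_add[OF assms(1,3) subspace_k_smult[OF assms(2,4)], of "-1"]
    linear_on_k_smult[OF assms(1,4), of "-1"] by simp

lemma vfunctor_subspace: "vfunctor F Fmap \<Longrightarrow> subspace_k (F n)"
  by (simp add: vfunctor_def)

lemma vfunctor_map_in:
  "vfunctor F Fmap \<Longrightarrow> A \<in> carrier_mat n m \<Longrightarrow> x \<in> F n \<Longrightarrow> Fmap A x \<in> F m"
  unfolding vfunctor_def by blast

lemma vfunctor_linear: "vfunctor F Fmap \<Longrightarrow> A \<in> carrier_mat n m \<Longrightarrow> linear_on_k (F n) (Fmap A)"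
  unfolding vfunctor_def by blast

lemma vfunctor_id: "vfunctor F Fmap \<Longrightarrow> x \<in> F n \<Longrightarrow> Fmap (1\<^sub>m n) x = x"
  unfolding vfunctor_def by blast

lemma vfunctor_comp:
  "vfunctor F Fmap \<Longrightarrow> A \<in> carrier_mat n m \<Longrightarrow> B \<in> carrier_mat m l \<Longrightarrow> x \<in> F n
   \<Longrightarrow> Fmap (A * B) x = Fmap B (Fmap A x)"
  unfolding vfunctor_def by blast

lemma subfunctorD:
  assumes "subfunctor G F Fmap"
  shows "subspace_k (G n)" "G n \<subseteq> F n" "A \<in> carrier_mat n m \<Longrightarrow> u \<in> G n \<Longrightarrow> Fmap A u \<in> G m"
  using assms unfolding subfunctor_def by blast+

lemma subfunctor_self: "vfunctor F Fmap \<Longrightarrow> subfunctor F F Fmap"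
  unfolding subfunctor_def by (metis vfunctor_subspace vfunctor_map_in order_refl)

section \<open>Finite functors have finite values\<close>

definition pullback_comb ::
    "('k::field mat \<Rightarrow> (nat \<Rightarrow> 'k) \<Rightarrow> (nat \<Rightarrow> 'k)) \<Rightarrow> nat \<Rightarrow> (nat \<Rightarrow> 'k) \<Rightarrow> nat
      \<Rightarrow> ('k mat \<Rightarrow> 'k) \<Rightarrow> nat \<Rightarrow> 'k" where
  "pullback_comb Fmap m x n c = (\<lambda>i. \<Sum>A\<in>carrier_mat m n. c A * Fmap A x i)"

definition adjoin_subfunctor ::
    "(nat \<Rightarrow> (nat \<Rightarrow> 'k::field) set) \<Rightarrow> ('k mat \<Rightarrow> (nat \<Rightarrow> 'k) \<Rightarrow> (nat \<Rightarrow> 'k)) \<Rightarrow> nat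
      \<Rightarrow> (nat \<Rightarrow> 'k) \<Rightarrow> nat \<Rightarrow> (nat \<Rightarrow> 'k) set" where
  "adjoin_subfunctor G Fmap m x n = {\<lambda>i. u i + pullback_comb Fmap m x n c i | u c. u \<in> G n}"

lemma adjoin_subfunctorI:
  "u \<in> G n \<Longrightarrow> (\<lambda>i. u i + pullback_comb Fmap m x n c i) \<in> adjoin_subfunctor G Fmap m x n"
  unfolding adjoin_subfunctor_def by blast

lemma adjoin_subfunctorE:
  assumes "v \<in> adjoin_subfunctor G Fmap m x n"
  obtains u c where "u \<in> G n" "v = (\<lambda>i. u i + pullback_comb Fmap m x n c i)"
  using assms unfolding adjoin_subfunctor_def by blast

lemma pullback_comb_in_subfunctor:
  fixes G :: "nat \<Rightarrow> (nat \<Rightarrow> 'k::{field,finite}) set"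
  assumes "subfunctor G F Fmap" "x \<in> G m"
  shows "pullback_comb Fmap m x n c \<in> G n"
  unfolding pullback_comb_def
  using assms subfunctorD[OF assms(1)]
  by (intro subspace_k_sum finite_carrier_mat) auto

lemma pullback_comb_add:
  "pullback_comb Fmap m x n (\<lambda>A. c A + c' A) i
     = pullback_comb Fmap m x n c i + pullback_comb Fmap m x n c' i"
  by (simp add: pullback_comb_def sum.distrib distrib_right)

lemma pullback_comb_smult:
  "pullback_comb Fmap m x n (\<lambda>A. a * c A) i = a * pullback_comb Fmap m x n c i"
  by (simp add: pullback_comb_def sum_distrib_left mult.assoc)

lemma pullback_comb_delta:
  fixes Fmap :: "'k::{field,finite} mat \<Rightarrow> (nat \<Rightarrow> 'k) \<Rightarrow> (nat \<Rightarrow> 'k)"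
  shows "pullback_comb Fmap m x m (\<lambda>A. if A = 1\<^sub>m m then 1 else 0) = Fmap (1\<^sub>m m) x"
proof
  fix i
  have "(\<Sum>A\<in>carrier_mat m m. (if A = 1\<^sub>m m then 1 else 0) * Fmap A x i)
      = (\<Sum>A\<in>carrier_mat m m. if A = 1\<^sub>m m then Fmap A x i else 0)"
    by (intro sum.cong) auto
  then show "pullback_comb Fmap m x m (\<lambda>A. if A = 1\<^sub>m m then 1 else 0) i = Fmap (1\<^sub>m m) x i"
    by (simp add: pullback_comb_def sum.delta[OF finite_carrier_mat] one_carrier_mat)
qed

lemma vfunctor_map_pullback_comb:
  fixes F :: "nat \<Rightarrow> (nat \<Rightarrow> 'k::{field,finite}) set"
  assumes vf: "vfunctor F Fmap" and x: "x \<in> F m" and B: "B \<in> carrier_mat n l"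
  shows "Fmap B (pullback_comb Fmap m x n c)
       = pullback_comb Fmap m x l (\<lambda>A'. \<Sum>A\<in>{A \<in> carrier_mat m n. A * B = A'}. c A)"
proof -
  have "Fmap B (pullback_comb Fmap m x n c)
      = (\<lambda>i. \<Sum>A\<in>carrier_mat m n. c A * Fmap (A * B) x i)"
    unfolding pullback_comb_def
    using vfunctor_map_in[OF vf _ x] vfunctor_comp[OF vf _ B x]
    by (subst linear_on_k_sum[OF vfunctor_linear[OF vf B] vfunctor_subspace[OF vf]
          finite_carrier_mat]) auto
  also have "\<dots> = (\<lambda>i. \<Sum>A'\<in>carrier_mat m l. \<Sum>A\<in>{A \<in> carrier_mat m n. A * B = A'}. c A * Fmap (A * B) x i)"
    using B by (intro ext sum.group[symmetric] finite_carrier_mat) auto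
  also have "\<dots> = (\<lambda>i. \<Sum>A'\<in>carrier_mat m l. \<Sum>A\<in>{A \<in> carrier_mat m n. A * B = A'}. c A * Fmap A' x i)"
    by (intro ext sum.cong) auto
  also have "\<dots> = pullback_comb Fmap m x l (\<lambda>A'. \<Sum>A\<in>{A \<in> carrier_mat m n. A * B = A'}. c A)"
    by (simp add: pullback_comb_def sum_distrib_right)
  finally show ?thesis .
qed

lemma adjoin_subfunctor_le:
  fixes G :: "nat \<Rightarrow> (nat \<Rightarrow> 'k::{field,finite}) set"
  assumes G': "subfunctor G' F Fmap" and "G \<le> G'" and x: "x \<in> G' m"
  shows "adjoin_subfunctor G Fmap m x \<le> G'"
proof (rule le_funI, rule subsetI)
  fix n v
  assume "v \<in> adjoin_subfunctor G Fmap m x n"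
  then obtain u c where "u \<in> G n" and v: "v = (\<lambda>i. u i + pullback_comb Fmap m x n c i)"
    by (elim adjoin_subfunctorE)
  then have "u \<in> G' n" using \<open>G \<le> G'\<close> by (auto simp: le_fun_def)
  then show "v \<in> G' n"
    unfolding v
    by (rule subspace_k_add[OF subfunctorD(1)[OF G'] _ pullback_comb_in_subfunctor[OF G' x]])
qed

lemma le_adjoin_subfunctor: "G \<le> adjoin_subfunctor G Fmap m x"
proof (rule le_funI, rule subsetI)
  fix n u
  assume "u \<in> G n"
  then have "(\<lambda>i. u i + pullback_comb Fmap m x n (\<lambda>_. 0) i) \<in> adjoin_subfunctor G Fmap m x n"
    by (rule adjoin_subfunctorI)
  then show "u \<in> adjoin_subfunctor G Fmap m x n" by (simp add: pullback_comb_def)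
qed

lemma mem_adjoin_subfunctor:
  fixes F :: "nat \<Rightarrow> (nat \<Rightarrow> 'k::{field,finite}) set"
  assumes "vfunctor F Fmap" "subfunctor G F Fmap" "x \<in> F m"
  shows "x \<in> adjoin_subfunctor G Fmap m x m"
proof -
  have "(\<lambda>i. vzero i + pullback_comb Fmap m x m (\<lambda>A. if A = 1\<^sub>m m then 1 else 0) i)
      \<in> adjoin_subfunctor G Fmap m x m"
    using subspace_k_vzero[OF subfunctorD(1)[OF assms(2)]] by (rule adjoin_subfunctorI)
  then show ?thesis
    using vfunctor_id[OF assms(1,3)] by (simp add: pullback_comb_delta vzero_def)
qed

lemma subspace_k_adjoin_subfunctor:
  assumes sG: "subspace_k (G n)"
  shows "subspace_k (adjoin_subfunctor G Fmap m x n)"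
  unfolding subspace_k_def
proof (intro conjI ballI allI)
  show "vzero \<in> adjoin_subfunctor G Fmap m x n"
    using le_adjoin_subfunctor[of G Fmap m x] subspace_k_vzero[OF sG] unfolding le_fun_def by blast
next
  fix v w
  assume "v \<in> adjoin_subfunctor G Fmap m x n" "w \<in> adjoin_subfunctor G Fmap m x n"
  obtain u c where u: "u \<in> G n" and v: "v = (\<lambda>i. u i + pullback_comb Fmap m x n c i)"
    using \<open>v \<in> _\<close> by (rule adjoin_subfunctorE)
  obtain u' c' where u': "u' \<in> G n" and w: "w = (\<lambda>i. u' i + pullback_comb Fmap m x n c' i)"
    using \<open>w \<in> _\<close> by (rule adjoin_subfunctorE)
  have "(\<lambda>i. (u i + u' i) + pullback_comb Fmap m x n (\<lambda>A. c A + c' A) i)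
      \<in> adjoin_subfunctor G Fmap m x n"
    using subspace_k_add[OF sG u u'] by (rule adjoin_subfunctorI)
  then show "(\<lambda>i. v i + w i) \<in> adjoin_subfunctor G Fmap m x n"
    unfolding v w by (simp add: pullback_comb_add add_ac)
next
  fix a v
  assume "v \<in> adjoin_subfunctor G Fmap m x n"
  then obtain u c where u: "u \<in> G n" and v: "v = (\<lambda>i. u i + pullback_comb Fmap m x n c i)"
    by (elim adjoin_subfunctorE)
  have "(\<lambda>i. a * u i + pullback_comb Fmap m x n (\<lambda>A. a * c A) i)
      \<in> adjoin_subfunctor G Fmap m x n"
    using subspace_k_smult[OF sG u] by (rule adjoin_subfunctorI)
  then show "(\<lambda>i. a * v i) \<in> adjoin_subfunctor G Fmap m x n"
    unfolding v by (simp add: pullback_comb_smult distrib_left)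
qed

lemma subfunctor_adjoin_subfunctor:
  fixes F :: "nat \<Rightarrow> (nat \<Rightarrow> 'k::{field,finite}) set"
  assumes vf: "vfunctor F Fmap" and G: "subfunctor G F Fmap" and x: "x \<in> F m"
  shows "subfunctor (adjoin_subfunctor G Fmap m x) F Fmap"
  unfolding subfunctor_def
proof (intro conjI allI impI ballI)
  fix n
  have "adjoin_subfunctor G Fmap m x \<le> F"
    using subfunctorD(2)[OF G] by (intro adjoin_subfunctor_le[OF subfunctor_self[OF vf] _ x] le_funI)
  then show "adjoin_subfunctor G Fmap m x n \<subseteq> F n" by (simp add: le_fun_def)
  show "subspace_k (adjoin_subfunctor G Fmap m x n)"
    by (rule subspace_k_adjoin_subfunctor[OF subfunctorD(1)[OF G]])
next
  fix n l and B :: "'k mat" and v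
  assume B: "B \<in> carrier_mat n l" and "v \<in> adjoin_subfunctor G Fmap m x n"
  then obtain u c where u: "u \<in> G n" and v: "v = (\<lambda>i. u i + pullback_comb Fmap m x n c i)"
    by (elim adjoin_subfunctorE)
  have "u \<in> F n" using subfunctorD(2)[OF G] u by blast
  moreover have "pullback_comb Fmap m x n c \<in> F n"
    by (rule pullback_comb_in_subfunctor[OF subfunctor_self[OF vf] x])
  ultimately have "Fmap B v = (\<lambda>i. Fmap B u i + pullback_comb Fmap m x l
      (\<lambda>A'. \<Sum>A\<in>{A \<in> carrier_mat m n. A * B = A'}. c A) i)"
    unfolding v vfunctor_map_pullback_comb[OF vf x B, symmetric]
    by (rule linear_on_k_add[OF vfunctor_linear[OF vf B]])
  also have "\<dots> \<in> adjoin_subfunctor G Fmap m x l"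
    using subfunctorD(3)[OF G B u] by (rule adjoin_subfunctorI)
  finally show "Fmap B v \<in> adjoin_subfunctor G Fmap m x l" .
qed

lemma pullback_comb_restrict:
  "pullback_comb Fmap m x n (restrict c (carrier_mat m n)) = pullback_comb Fmap m x n c"
  unfolding pullback_comb_def by (intro ext sum.cong) auto

lemma finite_adjoin_subfunctor:
  fixes G :: "nat \<Rightarrow> (nat \<Rightarrow> 'k::{field,finite}) set"
  assumes "finite (G n)"
  shows "finite (adjoin_subfunctor G Fmap m x n)"
proof -
  let ?C = "(carrier_mat m n :: 'k mat set) \<rightarrow>\<^sub>E (UNIV :: 'k set)"
  have "adjoin_subfunctor G Fmap m x n
      \<subseteq> (\<lambda>(u, c) i. u i + pullback_comb Fmap m x n c i) ` (G n \<times> ?C)"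
  proof
    fix v
    assume "v \<in> adjoin_subfunctor G Fmap m x n"
    then obtain u c where "u \<in> G n" and "v = (\<lambda>i. u i + pullback_comb Fmap m x n c i)"
      unfolding adjoin_subfunctor_def by blast
    then show "v \<in> (\<lambda>(u, c) i. u i + pullback_comb Fmap m x n c i) ` (G n \<times> ?C)"
      by (intro image_eqI[where x="(u, restrict c (carrier_mat m n))"])
        (simp_all add: pullback_comb_restrict)
  qed
  moreover have "finite (G n \<times> ?C)"
    using assms by (intro finite_cartesian_product finite_PiE finite_carrier_mat) auto
  ultimately show ?thesis by (rule finite_subset[OF _ finite_imageI])
qed

lemma finite_covering_subfunctor:
  fixes F :: "nat \<Rightarrow> (nat \<Rightarrow> 'k::{field,finite}) set"
  assumes vf: "vfunctor F Fmap" and G: "subfunctor G F Fmap" and G': "subfunctor G' F Fmap"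
    and less: "G < G'" and covering: "\<not> (\<exists>H. subfunctor H F Fmap \<and> G < H \<and> H < G')"
    and fin: "\<And>n. finite (G n)"
  shows "finite (G' n)"
proof -
  obtain m x where x: "x \<in> G' m" "x \<notin> G m"
    using less unfolding less_fun_def le_fun_def by blast
  let ?H = "adjoin_subfunctor G Fmap m x"
  have "x \<in> F m" using subfunctorD(2)[OF G'] x by blast
  then have "subfunctor ?H F Fmap" "x \<in> ?H m"
    using subfunctor_adjoin_subfunctor[OF vf G] mem_adjoin_subfunctor[OF vf G] by blast+
  moreover have "G < ?H"
  proof -
    have "G \<noteq> ?H" using \<open>x \<in> ?H m\<close> x(2) by metis
    then show ?thesis using le_adjoin_subfunctor[of G Fmap m x] by (simp add: less_le)
  qed
  moreover have "?H \<le> G'"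
    using less x(1) by (intro adjoin_subfunctor_le[OF G']) simp
  ultimately have "?H = G'"
    using covering unfolding less_le by blast
  with finite_adjoin_subfunctor[of G n Fmap m x] fin show ?thesis by simp
qed

lemma finite_functor_finite:
  fixes F :: "nat \<Rightarrow> (nat \<Rightarrow> 'k::{field,finite}) set"
  assumes "finite_functor F Fmap"
  shows "finite (F n)"
proof -
  have vf: "vfunctor F Fmap" using assms by (simp add: finite_functor_def)
  from assms obtain k and Gs :: "nat \<Rightarrow> nat \<Rightarrow> (nat \<Rightarrow> 'k) set" where
    "Gs 0 = (\<lambda>n. {vzero})" and "Gs k = F" and
    sub: "\<forall>i\<le>k. subfunctor (Gs i) F Fmap" and
    step: "\<forall>i<k. Gs i < Gs (Suc i) \<and> \<not> (\<exists>H. subfunctor H F Fmap \<and> Gs i < H \<and> H < Gs (Suc i))"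
    unfolding finite_functor_def by blast
  have "i \<le> k \<Longrightarrow> finite (Gs i n)" for i n
  proof (induction i arbitrary: n)
    case 0
    then show ?case using \<open>Gs 0 = _\<close> by simp
  next
    case (Suc i)
    have "i < k" using Suc.prems by simp
    then show ?case
      using finite_covering_subfunctor[OF vf, of "Gs i" "Gs (Suc i)"] sub step Suc.IH
      by (meson Suc_leI less_imp_le_nat)
  qed
  then show ?thesis using \<open>Gs k = F\<close> by blast
qed

section \<open>Functors of bounded polynomial degree\<close>

text \<open>The inclusion omitting the i-th summand of F^k = \<Oplus> F^(ms!i), followed by a selection g,
is a selection of smaller size; so an element killed by all smaller selections is pulled back by
g into the cross effect.\<close>
lemma selection_pullback_in_cross_effect:
  fixes F :: "nat \<Rightarrow> (nat \<Rightarrow> 'k::field) set"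
  assumes vf: "vfunctor F Fmap" and z: "z \<in> F N" and g: "g ` {..<k} \<subseteq> {..<N}"
    and ms: "sum_list ms = k" "\<forall>a\<in>set ms. 0 < a"
    and smaller: "\<And>k' h. k' < k \<Longrightarrow> h ` {..<k'} \<subseteq> {..<N}
      \<Longrightarrow> Fmap (selection_mat N h k') z = vzero"
  shows "Fmap (selection_mat N g k) z \<in> cross_effect F Fmap ms"
proof -
  let ?y = "Fmap (selection_mat N g k) z"
  have "Fmap (incl_omit k (sum_list (take i ms)) (sum_list (take (Suc i) ms))) ?y = vzero"
    if i: "i < length ms" for i
  proof -
    define a where "a = sum_list (take i ms)"
    define b where "b = sum_list (take (Suc i) ms)"
    define h where "h = (\<lambda>c. if c < a then c else c + (b - a))"
    have "take (Suc i) ms = take i ms @ [ms ! i]" using i by (rule take_Suc_conv_app_nth)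
    then have ab: "a < b" using ms(2) i by (simp add: a_def b_def)
    have "sum_list ms = b + sum_list (drop (Suc i) ms)"
      unfolding b_def by (metis append_take_drop_id sum_list_append)
    then have bk: "b \<le> k" using ms(1) by simp
    have hk: "h ` {..<k - (b - a)} \<subseteq> {..<k}" using ab bk by (auto simp: h_def)
    have "Fmap (incl_omit k a b) ?y = Fmap (selection_mat k h (k - (b - a))) ?y"
      by (simp add: incl_omit_eq_selection_mat h_def)
    also have "\<dots> = Fmap (selection_mat N g k * selection_mat k h (k - (b - a))) z"
      by (rule vfunctor_comp[OF vf selection_mat_carrier selection_mat_carrier z, symmetric])
    also have "\<dots> = Fmap (selection_mat N (g \<circ> h) (k - (b - a))) z"
      by (simp add: selection_mat_mult[OF hk])
    also have "\<dots> = vzero"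
      using ab bk hk g by (intro smaller) auto
    finally show ?thesis by (simp add: a_def b_def)
  qed
  then show ?thesis
    unfolding cross_effect_def
    using vfunctor_map_in[OF vf selection_mat_carrier z] ms(1) by simp
qed

lemma poly_degree_le_vanishing:
  fixes F :: "nat \<Rightarrow> (nat \<Rightarrow> 'k::field) set"
  assumes vf: "vfunctor F Fmap" and deg: "poly_degree_le F Fmap d" and z: "z \<in> F N"
    and small: "\<And>k g. k \<le> d \<Longrightarrow> g ` {..<k} \<subseteq> {..<N}
      \<Longrightarrow> Fmap (selection_mat N g k) z = vzero"
  shows "z = vzero"
proof -
  have "\<forall>g. g ` {..<k} \<subseteq> {..<N} \<longrightarrow> Fmap (selection_mat N g k) z = vzero" for k
  proof (induction k rule: less_induct)
    case (less k)
    show ?case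
    proof (intro allI impI)
      fix g
      assume g: "g ` {..<k} \<subseteq> {..<N}"
      show "Fmap (selection_mat N g k) z = vzero"
      proof (cases "k \<le> d")
        case True
        then show ?thesis using small g by blast
      next
        case False
        define ms where "ms = replicate d 1 @ [k - d]"
        have "sum_list ms = k" "\<forall>a\<in>set ms. 0 < a"
          using False by (auto simp: ms_def sum_list_replicate)
        then have "Fmap (selection_mat N g k) z \<in> cross_effect F Fmap ms"
          using less.IH by (intro selection_pullback_in_cross_effect[OF vf z g]) blast+
        moreover have "length ms = Suc d" by (simp add: ms_def)
        ultimately show ?thesis using deg unfolding poly_degree_le_def by blast
      qed
    qed
  qed
  then have "Fmap (selection_mat N id N) z = vzero" by simp
  then show ?thesis by (simp add: selection_mat_id vfunctor_id[OF vf z])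
qed

lemma poly_degree_le_eqI:
  fixes F :: "nat \<Rightarrow> (nat \<Rightarrow> 'k::field) set"
  assumes vf: "vfunctor F Fmap" and deg: "poly_degree_le F Fmap d"
    and x: "x \<in> F N" and y: "y \<in> F N"
    and eq: "\<And>k g. k \<le> d \<Longrightarrow> g \<in> {..<k} \<rightarrow>\<^sub>E {..<N}
      \<Longrightarrow> Fmap (selection_mat N g k) x = Fmap (selection_mat N g k) y"
  shows "x = y"
proof -
  have diff: "(\<lambda>i. x i - y i) \<in> F N"
    using subspace_k_add[OF vfunctor_subspace[OF vf] x
        subspace_k_smult[OF vfunctor_subspace[OF vf] y, of "-1"]] by simp
  have "(\<lambda>i. x i - y i) = vzero"
  proof (rule poly_degree_le_vanishing[OF vf deg diff])
    fix k g
    assume "k \<le> d" "g ` {..<k} \<subseteq> {..<N}"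
    then have "Fmap (selection_mat N g k) x = Fmap (selection_mat N g k) y"
      using eq[of k "restrict g {..<k}"] by (auto simp: selection_mat_restrict[of N g])
    then show "Fmap (selection_mat N g k) (\<lambda>i. x i - y i) = vzero"
      by (simp add: linear_on_k_diff[OF vfunctor_linear[OF vf selection_mat_carrier]
            vfunctor_subspace[OF vf] x y] vzero_def)
  qed
  then show ?thesis by (simp add: fun_eq_iff vzero_def)
qed

lemma card_poly_degree_le:
  fixes F :: "nat \<Rightarrow> (nat \<Rightarrow> 'k::field) set"
  assumes vf: "vfunctor F Fmap" and deg: "poly_degree_le F Fmap d" and fin: "\<And>n. finite (F n)"
  shows "card (F t) \<le> card (\<Union>k\<le>d. F k) ^ (\<Sum>k\<le>d. t ^ k)"
proof -
  define W where "W = (\<Union>k\<le>d. F k)"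
  define I where "I = (SIGMA k:{..d}. {..<k} \<rightarrow>\<^sub>E {..<t})"
  define restrictions where
    "restrictions v = (\<lambda>(k, g)\<in>I. Fmap (selection_mat t g k) v)" for v
  have "finite I" unfolding I_def by (intro finite_SigmaI finite_PiE) auto
  have "inj_on restrictions (F t)"
  proof (rule inj_onI)
    fix v v'
    assume "v \<in> F t" "v' \<in> F t" and eq: "restrictions v = restrictions v'"
    show "v = v'"
    proof (rule poly_degree_le_eqI[OF vf deg \<open>v \<in> F t\<close> \<open>v' \<in> F t\<close>])
      fix k g
      assume "k \<le> d" "g \<in> {..<k} \<rightarrow>\<^sub>E {..<t}"
      then have "(k, g) \<in> I" by (simp add: I_def)
      then show "Fmap (selection_mat t g k) v = Fmap (selection_mat t g k) v'"
        using fun_cong[OF eq, of "(k, g)"] by (simp add: restrictions_def)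
    qed
  qed
  moreover have "restrictions ` F t \<subseteq> I \<rightarrow>\<^sub>E W"
  proof (rule image_subsetI)
    fix v
    assume "v \<in> F t"
    have "Fmap (selection_mat t g k) v \<in> W" if "(k, g) \<in> I" for k g
      using that vfunctor_map_in[OF vf selection_mat_carrier \<open>v \<in> F t\<close>]
      unfolding I_def W_def by blast
    then show "restrictions v \<in> I \<rightarrow>\<^sub>E W" by (auto simp: restrictions_def)
  qed
  moreover have "finite (I \<rightarrow>\<^sub>E W)"
    using \<open>finite I\<close> fin by (auto simp: W_def intro: finite_PiE)
  ultimately have "card (F t) \<le> card (I \<rightarrow>\<^sub>E W)"
    by (metis card_image card_mono)
  also have "\<dots> = card W ^ card I" using \<open>finite I\<close> by (simp add: card_PiE)
  also have "card I = (\<Sum>k\<le>d. t ^ k)"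
    unfolding I_def by (subst card_SigmaI) (auto simp: card_PiE intro: finite_PiE)
  finally show ?thesis by (simp add: W_def)
qed

lemma card_poly_degree_le_power:
  fixes F :: "nat \<Rightarrow> (nat \<Rightarrow> 'k::field) set"
  assumes vf: "vfunctor F Fmap" and deg: "poly_degree_le F Fmap d" and fin: "\<And>n. finite (F n)"
  shows "\<exists>M\<ge>1. \<forall>t\<ge>1. card (F t) \<le> M ^ ((d + 1) * t ^ d)"
proof -
  define M where "M = card (\<Union>k\<le>d. F k)"
  have "card (F 0) > 0"
    using fin[of 0] subspace_k_vzero[OF vfunctor_subspace[OF vf]] by (auto simp: card_gt_0_iff)
  then have "M \<ge> 1"
    using card_mono[of "\<Union>k\<le>d. F k" "F 0"] fin by (force simp: M_def)
  moreover have "card (F t) \<le> M ^ ((d + 1) * t ^ d)" if "t \<ge> 1" for t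
  proof -
    have "(\<Sum>k\<le>d. t ^ k) \<le> (\<Sum>k\<le>d. t ^ d)"
      using that by (intro sum_mono power_increasing) auto
    also have "\<dots> = (d + 1) * t ^ d" by simp
    finally show ?thesis
      using card_poly_degree_le[OF vf deg fin, of t] power_increasing[OF _ \<open>M \<ge> 1\<close>]
      unfolding M_def by (blast intro: le_trans)
  qed
  ultimately show ?thesis by blast
qed

lemma log_bigo_of_le_power:
  fixes f :: "nat \<Rightarrow> nat"
  assumes b: "b > 1" and M: "M \<ge> 1" and bound: "\<And>t. t \<ge> 1 \<Longrightarrow> f t \<le> M ^ (c * t ^ d)"
  shows "(\<lambda>t. log b (real (f t))) \<in> O(\<lambda>t. real t ^ d)"
proof -
  have "norm (log b (real (f t))) \<le> (real c * log b M) * norm (real t ^ d)" if "t \<ge> 1" for t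
  proof (cases "f t = 0")
    case True
    then show ?thesis using b M by (simp add: log_def)
  next
    case False
    have "real (f t) \<le> real M ^ (c * t ^ d)"
      using bound[OF that] by (metis of_nat_le_iff of_nat_power)
    then have "log b (f t) \<le> log b (real M ^ (c * t ^ d))"
      using b False by (intro log_mono) auto
    also have "\<dots> = (real c * log b M) * real t ^ d"
      using M by (simp add: log_nat_power)
    finally show ?thesis using b False by simp
  qed
  then have "eventually (\<lambda>t. norm (log b (real (f t)))
      \<le> (real c * log b M) * norm (real t ^ d)) at_top"
    by (intro eventually_at_top_linorderI[of 1])
  then show ?thesis by (rule bigoI)
qed

lemma embeds_into_finite_card_le:
  assumes "embeds_into X Xmap F Fmap \<eta>" "finite (F n)"
  shows "finite (X n)" "card (X n) \<le> card (F n)"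
proof -
  have "inj_on (\<eta> n) (X n)" "\<eta> n ` X n \<subseteq> F n"
    using assms(1) unfolding embeds_into_def by auto
  then show "finite (X n)" "card (X n) \<le> card (F n)"
    using assms(2) finite_imageD finite_subset card_inj_on_le by metis+
qed

theorem proposition6p4:
  fixes p :: nat
    and X :: "nat \<Rightarrow> 'a set"
    and Xmap :: "'k::{field,finite} mat \<Rightarrow> 'a \<Rightarrow> 'a"
    and d :: nat
  assumes "prime p"
    and "card (UNIV :: 'k set) = p"
    and "presheaf X Xmap"
    and "\<exists>n. X n \<noteq> {}"
    and "finite_of_degree X Xmap d"
  shows "(\<forall>n. finite (X n)) \<and>
         (\<lambda>t. log (real p) (real (card (X t)))) \<in> O(\<lambda>t. real t ^ d)"
proof -
  from assms(5) obtain F :: "nat \<Rightarrow> (nat \<Rightarrow> 'k) set" and Fmap \<eta> where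
    F: "finite_functor F Fmap" and deg: "poly_degree_le F Fmap d"
    and emb: "embeds_into X Xmap F Fmap \<eta>"
    unfolding finite_of_degree_def finite_deg_le_def by blast
  have vf: "vfunctor F Fmap" using F by (simp add: finite_functor_def)
  have finF: "finite (F n)" for n by (rule finite_functor_finite[OF F])
  obtain M where "M \<ge> 1" and M: "\<And>t. t \<ge> 1 \<Longrightarrow> card (F t) \<le> M ^ ((d + 1) * t ^ d)"
    using card_poly_degree_le_power[OF vf deg finF] by blast
  have "real p > 1" using prime_gt_1_nat[OF assms(1)] by simp
  then have "(\<lambda>t. log (real p) (real (card (X t)))) \<in> O(\<lambda>t. real t ^ d)"
    using \<open>M \<ge> 1\<close> le_trans[OF embeds_into_finite_card_le(2)[OF emb finF] M]
    by (rule log_bigo_of_le_power)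
  then show ?thesis using embeds_into_finite_card_le(1)[OF emb finF] by blast
qed

end
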